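(* Let $K$ be a field of characteristic $\neq 2$, $n\ge1$, and let $\mathcal C$ be an EACP over $K$ with natural basis $\{h_1,\dots,h_n,r\}$ and structural constants $a_{ij},b_i$. Suppose $\sum_{j=1}^n a_{ij}a_{jk}=0$ and $b_i=0$ for all $i,k=1,\dots,n$. Then $\mathcal C$ is alternative, power associative, and satisfies the Jacobi identity $(xy)z+(yz)x+(zx)y=0$ and the Jordan identity $(xy)x^2=x(yx^2)$ for all $x,y,z\in\mathcal C$.
   Context: An EACP over a field $K$ (characteristic $\neq 2$) is a $K$-algebra $\mathcal C$ with a basis $\{h_1,\dots,h_n,r\}$ (called a natural basis) whose multiplication is determined by bilinearity from $$h_ir=rh_i=\tfrac12\Big(\sum_{j=1}^n a_{ij}h_j+b_ir\Big),\qquad h_ih_j=0\ (i,j=1,\dots,n),\qquad rr=0,$$ for some constants $a_{ij},b_i\in K$. Alternative means $(xx)y=x(xy)$ and $(yx)x=y(xx)$ for all $x,y$; power associative means $x^mx^k=x^{m+k}$ for all $x$ and all positive integers $m,k$. *)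

theory Defs
  imports Main
begin

text \<open>Natural basis indexed by option nat: Some i is h_i (1 \<le> i \<le> n), None is r.
  An element of the EACP is its coordinate function, supported on the basis indices.\<close>

definition eacp_basis :: "nat \<Rightarrow> nat option set" where
  "eacp_basis n = insert None (Some ` {1..n})"

definition eacp_carrier :: "nat \<Rightarrow> (nat option \<Rightarrow> 'a::zero) set" where
  "eacp_carrier n = {x. \<forall>w. w \<notin> eacp_basis n \<longrightarrow> x w = 0}"

text \<open>Coordinates of h_i r = r h_i = 1/2 (sum_j a_ij h_j + b_i r).\<close>
definition hr_coord :: "nat \<Rightarrow> (nat \<Rightarrow> nat \<Rightarrow> 'a::field) \<Rightarrow> (nat \<Rightarrow> 'a) \<Rightarrow> nat \<Rightarrow> nat option \<Rightarrow> 'a" where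
  "hr_coord n a b i w = (case w of
      Some j \<Rightarrow> (if j \<in> {1..n} then a i j / 2 else 0)
    | None \<Rightarrow> b i / 2)"

definition eacp_bprod :: "nat \<Rightarrow> (nat \<Rightarrow> nat \<Rightarrow> 'a::field) \<Rightarrow> (nat \<Rightarrow> 'a) \<Rightarrow> nat option \<Rightarrow> nat option \<Rightarrow> nat option \<Rightarrow> 'a" where
  "eacp_bprod n a b u v = (case (u, v) of
      (Some i, None) \<Rightarrow> hr_coord n a b i
    | (None, Some i) \<Rightarrow> hr_coord n a b i
    | _ \<Rightarrow> (\<lambda>w. 0))"

definition eacp_mult :: "nat \<Rightarrow> (nat \<Rightarrow> nat \<Rightarrow> 'a::field) \<Rightarrow> (nat \<Rightarrow> 'a) \<Rightarrow> (nat option \<Rightarrow> 'a) \<Rightarrow> (nat option \<Rightarrow> 'a) \<Rightarrow> (nat option \<Rightarrow> 'a)" where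
  "eacp_mult n a b x y = (\<lambda>w. \<Sum>u\<in>eacp_basis n. \<Sum>v\<in>eacp_basis n. x u * y v * eacp_bprod n a b u v w)"

fun eacp_pow :: "nat \<Rightarrow> (nat \<Rightarrow> nat \<Rightarrow> 'a::field) \<Rightarrow> (nat \<Rightarrow> 'a) \<Rightarrow> (nat option \<Rightarrow> 'a) \<Rightarrow> nat \<Rightarrow> (nat option \<Rightarrow> 'a)" where
  "eacp_pow n a b x 0 = (\<lambda>w. 0)"
| "eacp_pow n a b x (Suc 0) = x"
| "eacp_pow n a b x (Suc (Suc k)) = eacp_mult n a b (eacp_pow n a b x (Suc k)) x"

end

theory Submission
  imports Defs
begin

text \<open>When all b_i vanish, every product xy lies in the span of the h_i, and multiplying such
  an element p by z gives z_r times the h-part of p applied to the matrix A = (a_ij) (up to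
  the factor 1/2). The h-part of xy is itself a vector times A, so the triple product
  involves A^2 = 0 and vanishes: \<open>\<C>\<^sup>2 \<C> = \<C> \<C>\<^sup>2 = 0\<close>. Each identity of the
  theorem is then 0 = 0, except x x = x^2 in power associativity.\<close>

lemma eacp_mult_eq:
  "eacp_mult n a b x y w =
     (\<Sum>i=1..n. (x None * y (Some i) + x (Some i) * y None) * hr_coord n a b i w)"
proof -
  have "None \<notin> Some ` {1..n}" by auto
  then show ?thesis
    unfolding eacp_mult_def eacp_basis_def
    by (simp add: sum.reindex eacp_bprod_def sum.distrib algebra_simps sum_distrib_left
             del: One_nat_def)
qed

lemma eacp_mult_commute: "eacp_mult n a b x y = eacp_mult n a b y x"
  by (rule ext) (simp add: eacp_mult_eq algebra_simps)

lemma eacp_mult_zero_left: "eacp_mult n a b (\<lambda>w. 0) y = (\<lambda>w. 0)"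
  by (rule ext) (simp add: eacp_mult_eq)

lemma eacp_mult_zero_right: "eacp_mult n a b x (\<lambda>w. 0) = (\<lambda>w. 0)"
  by (rule ext) (simp add: eacp_mult_eq)

lemma eacp_mult_None_eq_0:
  assumes "\<forall>i\<in>{1..n}. b i = 0"
  shows "eacp_mult n a b x y None = 0"
  using assms by (simp add: eacp_mult_eq hr_coord_def)

lemma eacp_mult_Some:
  "k \<in> {1..n} \<Longrightarrow>
   eacp_mult n a b x y (Some k) = (\<Sum>i=1..n. (x None * y (Some i) + x (Some i) * y None) * a i k / 2)"
  by (simp add: eacp_mult_eq hr_coord_def)

lemma eacp_mult_eq_if_None_eq_0:
  assumes "p None = 0"
  shows "eacp_mult n a b p z w = z None * (\<Sum>i=1..n. p (Some i) * hr_coord n a b i w)"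
  using assms by (simp add: eacp_mult_eq sum_distrib_left algebra_simps)

lemma hr_coord_combination_of_product_eq_0:
  fixes a :: "nat \<Rightarrow> nat \<Rightarrow> 'a::field"
  assumes nil: "\<forall>i\<in>{1..n}. \<forall>k\<in>{1..n}. (\<Sum>j=1..n. a i j * a j k) = 0"
    and b0: "\<forall>i\<in>{1..n}. b i = 0"
  shows "(\<Sum>i=1..n. eacp_mult n a b x y (Some i) * hr_coord n a b i w) = 0"
proof (cases "\<exists>k\<in>{1..n}. w = Some k")
  case False
  with b0 show ?thesis by (cases w) (auto simp: hr_coord_def)
next
  case True
  then obtain k where k: "k \<in> {1..n}" and w: "w = Some k" by blast
  define c where "c j = x None * y (Some j) + x (Some j) * y None" for j
  have "(\<Sum>i=1..n. eacp_mult n a b x y (Some i) * hr_coord n a b i w)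
      = (\<Sum>i=1..n. (\<Sum>j=1..n. c j * a j i / 2) * (a i k / 2))"
    using k w by (intro sum.cong) (auto simp: eacp_mult_Some hr_coord_def c_def)
  also have "\<dots> = (\<Sum>i=1..n. \<Sum>j=1..n. c j * (a j i * a i k) / 4)"
    unfolding sum_distrib_right
    by (intro sum.cong refl) (simp add: times_divide_times_eq mult.assoc)
  also have "\<dots> = (\<Sum>j=1..n. c j * (\<Sum>i=1..n. a j i * a i k) / 4)"
    by (subst sum.swap) (simp add: sum_distrib_left sum_divide_distrib)
  also have "\<dots> = 0"
    using nil k by simp
  finally show ?thesis .
qed

lemma eacp_mult_product_left_eq_0:
  fixes a :: "nat \<Rightarrow> nat \<Rightarrow> 'a::field"
  assumes nil: "\<forall>i\<in>{1..n}. \<forall>k\<in>{1..n}. (\<Sum>j=1..n. a i j * a j k) = 0"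
    and b0: "\<forall>i\<in>{1..n}. b i = 0"
  shows "eacp_mult n a b (eacp_mult n a b x y) z = (\<lambda>w. 0)"
proof
  fix w
  have "eacp_mult n a b x y None = 0"
    using b0 by (rule eacp_mult_None_eq_0)
  then show "eacp_mult n a b (eacp_mult n a b x y) z w = 0"
    using hr_coord_combination_of_product_eq_0[OF nil b0, of x y w]
    by (simp add: eacp_mult_eq_if_None_eq_0)
qed

lemma eacp_mult_product_right_eq_0:
  fixes a :: "nat \<Rightarrow> nat \<Rightarrow> 'a::field"
  assumes "\<forall>i\<in>{1..n}. \<forall>k\<in>{1..n}. (\<Sum>j=1..n. a i j * a j k) = 0"
    and "\<forall>i\<in>{1..n}. b i = 0"
  shows "eacp_mult n a b z (eacp_mult n a b x y) = (\<lambda>w. 0)"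
  using eacp_mult_product_left_eq_0[OF assms] by (simp add: eacp_mult_commute)

lemma eacp_pow_ge_3_eq_0:
  fixes a :: "nat \<Rightarrow> nat \<Rightarrow> 'a::field"
  assumes "\<forall>i\<in>{1..n}. \<forall>k\<in>{1..n}. (\<Sum>j=1..n. a i j * a j k) = 0"
    and "\<forall>i\<in>{1..n}. b i = 0"
    and "k \<ge> 3"
  shows "eacp_pow n a b x k = (\<lambda>w. 0)"
proof -
  obtain j where "k = Suc (Suc (Suc j))"
    using \<open>k \<ge> 3\<close> by (auto simp: numeral_3_eq_3 dest!: le_Suc_ex)
  then show ?thesis
    by (cases j) (simp_all add: eacp_mult_product_left_eq_0[OF assms(1,2)] eacp_mult_zero_left)
qed

lemma eacp_pow_ge_2_eq_mult:
  "k \<ge> 2 \<Longrightarrow> eacp_pow n a b x k = eacp_mult n a b (eacp_pow n a b x (k - 1)) x"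
  by (auto simp: numeral_2_eq_2 dest!: le_Suc_ex)

lemma eacp_pow_mult_pow:
  fixes a :: "nat \<Rightarrow> nat \<Rightarrow> 'a::field"
  assumes nil: "\<forall>i\<in>{1..n}. \<forall>k\<in>{1..n}. (\<Sum>j=1..n. a i j * a j k) = 0"
    and b0: "\<forall>i\<in>{1..n}. b i = 0"
    and "m \<ge> 1" "k \<ge> 1"
  shows "eacp_mult n a b (eacp_pow n a b x m) (eacp_pow n a b x k) = eacp_pow n a b x (m + k)"
proof (cases "m = 1 \<and> k = 1")
  case True
  then show ?thesis by (simp add: numeral_2_eq_2)
next
  case False
  then have "m \<ge> 2 \<or> k \<ge> 2" using assms(3,4) by linarith
  then have "eacp_mult n a b (eacp_pow n a b x m) (eacp_pow n a b x k) = (\<lambda>w. 0)"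
    by (auto simp: eacp_pow_ge_2_eq_mult eacp_mult_product_left_eq_0[OF nil b0]
                   eacp_mult_product_right_eq_0[OF nil b0])
  moreover have "eacp_pow n a b x (m + k) = (\<lambda>w. 0)"
    using False assms by (intro eacp_pow_ge_3_eq_0) auto
  ultimately show ?thesis by simp
qed

theorem mainTheorem3:
  fixes n :: nat and a :: "nat \<Rightarrow> nat \<Rightarrow> 'a::field" and b :: "nat \<Rightarrow> 'a"
  assumes char: "(2::'a) \<noteq> 0"
    and n: "n \<ge> 1"
    and nil: "\<forall>i\<in>{1..n}. \<forall>k\<in>{1..n}. (\<Sum>j=1..n. a i j * a j k) = 0"
    and b0: "\<forall>i\<in>{1..n}. b i = 0"
  shows "(\<forall>x\<in>eacp_carrier n. \<forall>y\<in>eacp_carrier n.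
            eacp_mult n a b (eacp_mult n a b x x) y = eacp_mult n a b x (eacp_mult n a b x y)
          \<and> eacp_mult n a b (eacp_mult n a b y x) x = eacp_mult n a b y (eacp_mult n a b x x))
       \<and> (\<forall>x\<in>eacp_carrier n. \<forall>m\<ge>1. \<forall>k\<ge>1.
            eacp_mult n a b (eacp_pow n a b x m) (eacp_pow n a b x k) = eacp_pow n a b x (m + k))
       \<and> (\<forall>x\<in>eacp_carrier n. \<forall>y\<in>eacp_carrier n. \<forall>z\<in>eacp_carrier n.
            (\<lambda>w. eacp_mult n a b (eacp_mult n a b x y) z w + eacp_mult n a b (eacp_mult n a b y z) x w
                 + eacp_mult n a b (eacp_mult n a b z x) y w) = (\<lambda>w. 0))
       \<and> (\<forall>x\<in>eacp_carrier n. \<forall>y\<in>eacp_carrier n.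
            eacp_mult n a b (eacp_mult n a b x y) (eacp_mult n a b x x)
              = eacp_mult n a b x (eacp_mult n a b y (eacp_mult n a b x x)))"
  by (simp add: eacp_mult_product_left_eq_0[OF nil b0] eacp_mult_product_right_eq_0[OF nil b0]
                eacp_pow_mult_pow[OF nil b0] eacp_mult_zero_right)

end
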